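(* Let $1\le p<2$, let $N\in\mathbb N$, $d,n\ge 1$, and let $f_1,\dots,f_d\colon\mathbb R^n\to\mathbb R^n$ be of class $C^2_b$ with $\max_{\mu=1,\dots,d}\|f_\mu\|_{C^2_b}\le L$ for some constant $L>0$. Let $\mathbf w=(\mathbf w_0,\dots,\mathbf w_N)$ and $\tilde{\mathbf w}=(\tilde{\mathbf w}_0,\dots,\tilde{\mathbf w}_N)$ be time series in $\mathbb R^d$, let $\xi,\tilde\xi\in\mathbb R^n$, and let $\mathbf x,\tilde{\mathbf x}$ be the solutions of \[ \mathbf x_{k+1}=\mathbf x_k+\sum_{\mu=1}^d f_\mu(\mathbf x_k)(\mathbf w^\mu_{k+1}-\mathbf w^\mu_k),\quad \mathbf x_0=\xi,\qquad \tilde{\mathbf x}_{k+1}=\tilde{\mathbf x}_k+\sum_{\mu=1}^d f_\mu(\tilde{\mathbf x}_k)(\tilde{\mathbf w}^\mu_{k+1}-\tilde{\mathbf w}^\mu_k),\quad \tilde{\mathbf x}_0=\tilde\xi, \] for $k=0,\dots,N-1$. Then \[ \sup_{k=0,\dots,N}|\mathbf x_k-\tilde{\mathbf x}_k|\le 2c_{p,N}^{1/p}\exp\!\Big(c_{p,N}L^p\big(\|\mathbf w\|_{p;[0,N]}^p+\|\tilde{\mathbf w}\|_{p;[0,N]}^p\big)\Big)\big(|\xi-\tilde\xi|+L\|\mathbf w-\tilde{\mathbf w}\|_{p;[0,N]}\big), \] where $c_{p,N}\coloneqq(4e^2)^p\big(4^{p-1}C_{p,N}^p+1\big)$ and $C_{p,N}\coloneqq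 2^{2/p}\zeta_N(2/p)$, with $\zeta_N(s)\coloneqq\sum_{j=1}^N j^{-s}$.
   Context: $\mathbb R^n$ carries a fixed norm $|\cdot|$ and $\mathbb R^d$ carries the $\ell^1$ norm $|a|=\sum_\mu|a^\mu|$; derivatives are measured in the induced operator norms. For $g\colon\mathbb R^n\to\mathbb R^n$, $\|g\|_{C^2_b}\coloneqq\max_{j=0,1,2}\|D^jg\|_\infty$ (with $D^0g=g$), and $C^2_b$ is the class of $C^2$ maps for which this is finite. A time series is a finite sequence $\mathbf w=(\mathbf w_0,\dots,\mathbf w_N)$; upper indices denote components. For $0\le k<l\le N$, $\mathcal S_{k,l}$ is the set of all increasing sequences $s=(s_0=k<s_1<\dots<s_m<s_{m+1}=l)$ of integers, with $\#s\coloneqq m$, and the $p$-variation is $\|\mathbf w\|_{p;[k,l]}\coloneqq\big(\max_{s\in\mathcal S_{k,l}}\sum_{j=0}^{\#s}|\mathbf w_{s_{j+1}}-\mathbf w_{s_j}|^p\big)^{1/p}$. *)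

theory Defs
  imports "HOL-Analysis.Analysis"
begin

text \<open>Vectors of R^d are represented as functions nat => real, only the components
  0..d-1 being relevant. The norm on R^d is the l1 norm.\<close>
definition l1norm :: "nat \<Rightarrow> (nat \<Rightarrow> real) \<Rightarrow> real" where
  "l1norm d a = (\<Sum>\<mu><d. \<bar>a \<mu>\<bar>)"

definition partitions :: "nat \<Rightarrow> nat \<Rightarrow> nat list set" where
  "partitions k l = {s. s \<noteq> [] \<and> sorted_wrt (<) s \<and> hd s = k \<and> last s = l}"

definition pvar_sum :: "real \<Rightarrow> nat \<Rightarrow> (nat \<Rightarrow> nat \<Rightarrow> real) \<Rightarrow> nat list \<Rightarrow> real" where
  "pvar_sum p d w s =
     (\<Sum>j < length s - 1. l1norm d (\<lambda>\<mu>. w (s ! Suc j) \<mu> - w (s ! j) \<mu>) powr p)"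

definition pvar :: "real \<Rightarrow> nat \<Rightarrow> (nat \<Rightarrow> nat \<Rightarrow> real) \<Rightarrow> nat \<Rightarrow> nat \<Rightarrow> real" where
  "pvar p d w k l = (Max (pvar_sum p d w ` partitions k l)) powr (1 / p)"

definition zetaN :: "nat \<Rightarrow> real \<Rightarrow> real" where
  "zetaN N s = (\<Sum>j=1..N. real j powr (- s))"

definition CpN :: "real \<Rightarrow> nat \<Rightarrow> real" where
  "CpN p N = 2 powr (2 / p) * zetaN N (2 / p)"

definition cpN :: "real \<Rightarrow> nat \<Rightarrow> real" where
  "cpN p N = (4 * exp 2) powr p * (4 powr (p - 1) * CpN p N powr p + 1)"

text \<open>f : V -> V is C^2_b with ||f||_{C^2_b} <= L, where Df, D2f are the first and
  second derivatives (operator norms via the bounded-linear-function type).\<close>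
definition C2b_bounded :: "('a::real_normed_vector \<Rightarrow> 'a) \<Rightarrow> real \<Rightarrow> bool" where
  "C2b_bounded f L \<longleftrightarrow>
     (\<exists>Df D2f. (\<forall>x. (f has_derivative blinfun_apply (Df x)) (at x)) \<and>
               (\<forall>x. (Df has_derivative blinfun_apply (D2f x)) (at x)) \<and>
               continuous_on UNIV D2f \<and>
               (\<forall>x. norm (f x) \<le> L \<and> norm (Df x) \<le> L \<and> norm (D2f x) \<le> L))"

end

theory Submission
  imports Defs
begin

text \<open>
  The p-th power of the p-variation is a control: a superadditive function of intervals.
  A discrete sewing lemma (Young's argument of removing, one at a time, the partition point
  whose neighbouring intervals carry the least control) bounds the difference between the sum
  of a germ over unit steps and the germ on the whole interval, provided the defect of the germ
  is dominated by a power 2/p > 1 of a control. For the Euler germ this yields an a priori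
  bound on the increments of a solution on every interval of small control, and the same
  argument applied to the difference of two solutions bounds it there by twice its initial
  value plus the p-variation of the difference of the drivers. Cutting [0,N] greedily into
  intervals of small control and paying a factor exp (c * omega) at each cut gives the
  exponential bound.
\<close>

section \<open>Controls and the discrete sewing lemma\<close>

definition control :: "(nat \<Rightarrow> nat \<Rightarrow> real) \<Rightarrow> bool" where
  "control R \<longleftrightarrow>
     (\<forall>a b. 0 \<le> R a b) \<and> (\<forall>a u b. a \<le> u \<longrightarrow> u \<le> b \<longrightarrow> R a u + R u b \<le> R a b)"

lemma control_nonneg: "control R \<Longrightarrow> 0 \<le> R a b"
  unfolding control_def by blast

lemma control_superadditive: "control R \<Longrightarrow> a \<le> u \<Longrightarrow> u \<le> b \<Longrightarrow> R a u + R u b \<le> R a b"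
  unfolding control_def by blast

lemma control_refl: "control R \<Longrightarrow> R a a = 0"
  using control_superadditive[of R a a a] control_nonneg[of R a a] by simp

lemma control_mono:
  assumes "control R" "a' \<le> a" "a \<le> b" "b \<le> b'"
  shows "R a b \<le> R a' b'"
proof -
  have "R a' a + R a b \<le> R a' b" "R a' b + R b b' \<le> R a' b'"
    using assms by (auto intro: control_superadditive)
  moreover have "0 \<le> R a' a" "0 \<le> R b b'"
    using assms(1) by (auto intro: control_nonneg)
  ultimately show ?thesis by linarith
qed

lemma control_lincomb:
  assumes "control R1" "control R2" "0 \<le> c1" "0 \<le> c2"
  shows "control (\<lambda>a b. c1 * R1 a b + c2 * R2 a b)"
proof -
  have "c1 * R1 a u + c2 * R2 a u + (c1 * R1 u b + c2 * R2 u b) \<le> c1 * R1 a b + c2 * R2 a b"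
    if "a \<le> u" "u \<le> b" for a u b
  proof -
    have "c1 * (R1 a u + R1 u b) \<le> c1 * R1 a b" "c2 * (R2 a u + R2 u b) \<le> c2 * R2 a b"
      using assms that by (auto intro: mult_left_mono control_superadditive)
    then show ?thesis by (simp add: algebra_simps)
  qed
  then show ?thesis
    using assms(3,4) control_nonneg[OF assms(1)] control_nonneg[OF assms(2)]
    unfolding control_def by auto
qed

lemma obtain_normalized_control:
  assumes R1: "control R1" and R2: "control R2"
  obtains \<rho> where "control \<rho>" "\<rho> a b \<le> 2"
    "\<And>a' b'. a \<le> a' \<Longrightarrow> a' \<le> b' \<Longrightarrow> b' \<le> b \<Longrightarrow> R1 a' b' \<le> R1 a b * \<rho> a' b'"
    "\<And>a' b'. a \<le> a' \<Longrightarrow> a' \<le> b' \<Longrightarrow> b' \<le> b \<Longrightarrow> R2 a' b' \<le> R2 a b * \<rho> a' b'"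
proof -
  define n1 where "n1 = (if R1 a b = 0 then 1 else R1 a b)"
  define n2 where "n2 = (if R2 a b = 0 then 1 else R2 a b)"
  define \<rho> where "\<rho> a' b' = R1 a' b' / n1 + R2 a' b' / n2" for a' b'
  have n_pos: "0 < n1" "0 < n2"
    using control_nonneg[OF R1, of a b] control_nonneg[OF R2, of a b]
    unfolding n1_def n2_def by auto
  have scaled: "R a' b' \<le> R a b * (R a' b' / n)"
    if R: "control R" and n: "n = (if R a b = 0 then 1 else R a b)"
      and sub: "a \<le> a'" "a' \<le> b'" "b' \<le> b" for R n a' b'
    using control_mono[OF R sub] control_nonneg[OF R, of a' b'] n by auto
  have le_\<rho>: "R1 a' b' / n1 \<le> \<rho> a' b'" "R2 a' b' / n2 \<le> \<rho> a' b'" for a' b'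
    using control_nonneg[OF R1] control_nonneg[OF R2] n_pos unfolding \<rho>_def by auto
  have "control \<rho>"
    using control_lincomb[OF R1 R2, of "1 / n1" "1 / n2"] n_pos unfolding \<rho>_def by simp
  moreover have "\<rho> a b \<le> 2"
    using control_nonneg[OF R1, of a b] control_nonneg[OF R2, of a b]
    unfolding \<rho>_def n1_def n2_def by auto
  moreover have "R1 a' b' \<le> R1 a b * \<rho> a' b'" "R2 a' b' \<le> R2 a b * \<rho> a' b'"
    if "a \<le> a'" "a' \<le> b'" "b' \<le> b" for a' b'
    using scaled[OF R1 n1_def that] scaled[OF R2 n2_def that]
      mult_left_mono[OF le_\<rho>(1) control_nonneg[OF R1]]
      mult_left_mono[OF le_\<rho>(2) control_nonneg[OF R2]] by (meson order_trans)+
  ultimately show thesis using that by blast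
qed

lemma obtain_maximal_interval_below:
  assumes R: "control R" and "s \<le> N" "0 \<le> \<eta>"
  obtains u where "s \<le> u" "u \<le> N" "R s u \<le> \<eta>" "u < N \<Longrightarrow> \<eta> < R s (Suc u)"
proof -
  define U where "U = {u. s \<le> u \<and> u \<le> N \<and> R s u \<le> \<eta>}"
  have U: "finite U" "s \<in> U"
    unfolding U_def using assms control_refl[OF R] by (auto intro: finite_subset[of _ "{..N}"])
  then have "Max U \<in> U" by (auto intro: Max_in)
  moreover have "\<eta> < R s (Suc (Max U))" if "Max U < N"
  proof (rule ccontr)
    assume "\<not> \<eta> < R s (Suc (Max U))"
    then have "Suc (Max U) \<in> U" using \<open>Max U \<in> U\<close> that unfolding U_def by auto
    then show False using Max_ge[OF U(1)] by fastforce
  qed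
  ultimately show thesis using that unfolding U_def by blast
qed

fun chain_sum :: "(nat \<Rightarrow> nat \<Rightarrow> 'a::ab_group_add) \<Rightarrow> nat list \<Rightarrow> 'a" where
  "chain_sum X (a # b # r) = X a b + chain_sum X (b # r)"
| "chain_sum X _ = 0"

lemma chain_sum_remove:
  "chain_sum X (ys @ a # u # b # zs) = chain_sum X (ys @ a # b # zs) + (X a u + X u b - X a b)"
  by (induction ys rule: induct_list012) (simp_all add: algebra_simps)

lemma chain_sum_append:
  "xs \<noteq> [] \<Longrightarrow> last xs = hd ys \<Longrightarrow> chain_sum X (xs @ tl ys) = chain_sum X xs + chain_sum X ys"
  by (induction xs rule: induct_list012) (cases ys; simp)+

lemma chain_sum_upt: "s \<le> t \<Longrightarrow> chain_sum X [s..<Suc t] = (\<Sum>k\<in>{s..<t}. X k (Suc k))"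
proof (induction t)
  case (Suc t)
  then consider "s = Suc t" | "s \<le> t" by linarith
  then show ?case
  proof cases
    case 2
    then have "[s..<Suc (Suc t)] = [s..<Suc t] @ tl [t, Suc t]" by simp
    then show ?thesis
      using Suc.IH[OF 2] chain_sum_append[of "[s..<Suc t]" "[t, Suc t]" X] 2 by simp
  qed simp
qed simp

lemma partitions_subset: "xs \<in> partitions s t \<Longrightarrow> set xs \<subseteq> {s..t}"
proof (induction xs arbitrary: s)
  case (Cons a r)
  then show ?case
    by (cases r) (fastforce simp: partitions_def less_imp_le)+
qed simp

lemma chain_sum_le_control:
  assumes "control R" "xs \<in> partitions s t"
  shows "chain_sum R xs \<le> R s t"
  using assms(2)
proof (induction xs arbitrary: s rule: induct_list012)
  case (2 a)
  then show ?case using control_nonneg[OF assms(1)] by simp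
next
  case (3 a b r)
  then have "b # r \<in> partitions b t" "s = a" "a \<le> b" "b \<le> t"
    using partitions_subset[OF "3.prems"] by (auto simp: partitions_def)
  then show ?case
    using "3.IH"(2) control_superadditive[OF assms(1), of a b t] by fastforce
qed (simp add: partitions_def)

fun triple_sum :: "(nat \<Rightarrow> nat \<Rightarrow> real) \<Rightarrow> nat list \<Rightarrow> real" where
  "triple_sum R (a # u # b # r) = (R a u + R u b) + triple_sum R (u # b # r)"
| "triple_sum R _ = 0"

lemma triple_sum_le_chain_sum:
  assumes "\<And>a b. 0 \<le> R a b"
  shows "triple_sum R xs \<le> 2 * chain_sum R xs"
proof -
  have *: "triple_sum R (a # u # r) + R a u \<le> 2 * chain_sum R (a # u # r)" for a u r
  proof (induction r arbitrary: a u)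
    case (Cons b r)
    then show ?case using Cons[of u b] assms[of a u] by simp
  qed (simp add: assms)
  show ?thesis
  proof (induction xs rule: induct_list012)
    case (3 a u r)
    show ?case using *[of a u r] assms[of a u] by (simp; linarith)
  qed simp_all
qed

lemma exists_cheap_triple:
  "3 \<le> length xs \<Longrightarrow> \<exists>ys a u b zs. xs = ys @ a # u # b # zs \<and>
     (R a u + R u b) * (real (length xs) - 2) \<le> triple_sum R xs"
proof (induction R xs rule: triple_sum.induct)
  case (1 R a u b r)
  let ?v = "R a u + R u b" and ?m = "real (length (a # u # b # r)) - 2"
  show ?case
  proof (cases "r = [] \<or> ?v * ?m \<le> triple_sum R (a # u # b # r)")
    case True
    then show ?thesis by (intro exI[of _ "[]"]) auto
  next
    case False
    then have "3 \<le> length (u # b # r)" by (cases r) auto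
    moreover have "?m - 1 = real (length (u # b # r)) - 2" by simp
    ultimately obtain ys a' u' b' zs where split: "u # b # r = ys @ a' # u' # b' # zs"
      and cheap: "(R a' u' + R u' b') * (?m - 1) \<le> triple_sum R (u # b # r)"
      using "1.IH" by metis
    have "(R a' u' + R u' b') * (?m - 1) < ?v * (?m - 1)"
      using False cheap by (simp add: algebra_simps)
    then have "R a' u' + R u' b' < ?v"
      using False by (auto simp: mult_less_cancel_right)
    then have "(R a' u' + R u' b') * ?m \<le> triple_sum R (a # u # b # r)"
      using cheap by (simp add: algebra_simps)
    then show ?thesis using split by (intro exI[of _ "a # ys"]) auto
  qed
qed auto

lemma partition_remove_cheap_point:
  fixes X :: "nat \<Rightarrow> nat \<Rightarrow> 'a::ab_group_add"
  assumes R: "control R" and xs: "xs \<in> partitions s t" "length xs = m + 3"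
  obtains xs' a u b where "xs' \<in> partitions s t" "length xs' = m + 2"
    "s \<le> a" "a < u" "u < b" "b \<le> t"
    "chain_sum X xs = chain_sum X xs' + (X a u + X u b - X a b)"
    "(R a u + R u b) / 2 \<le> R s t / real (Suc m)"
proof -
  obtain ys a u b zs where split: "xs = ys @ a # u # b # zs"
    and cheap: "(R a u + R u b) * (real (length xs) - 2) \<le> triple_sum R xs"
    using exists_cheap_triple[of xs R] xs(2) by auto
  have "triple_sum R xs \<le> 2 * R s t"
    using triple_sum_le_chain_sum[of R xs] chain_sum_le_control[OF R xs(1)]
      control_nonneg[OF R] by fastforce
  then have "(R a u + R u b) / 2 \<le> R s t / real (Suc m)"
    using cheap xs(2) by (simp add: field_simps)
  moreover have sorted: "sorted_wrt (<) (ys @ a # u # b # zs)" and "hd xs = s" "last xs = t"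
    using xs(1) split by (auto simp: partitions_def)
  then have "ys @ a # b # zs \<in> partitions s t"
    unfolding partitions_def split by (cases ys; cases zs rule: rev_cases) (auto simp: sorted_wrt_append)
  moreover have "s \<le> a" "b \<le> t"
    using partitions_subset[OF xs(1)] split by auto
  moreover have "a < u" "u < b"
    using sorted by (simp_all add: sorted_wrt_append)
  ultimately show thesis
    using that[of "ys @ a # b # zs"] xs(2) split chain_sum_remove by fastforce
qed

lemma zetaN_nonneg: "0 \<le> zetaN N \<theta>"
  unfolding zetaN_def by (rule sum_nonneg) simp

lemma sewing_partition:
  fixes X :: "nat \<Rightarrow> nat \<Rightarrow> 'a::real_normed_vector"
  assumes \<theta>: "0 < \<theta>" and K: "0 \<le> K" and R: "control R"
    and defect: "\<And>a u b. s \<le> a \<Longrightarrow> a < u \<Longrightarrow> u < b \<Longrightarrow> b \<le> t \<Longrightarrow>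
       norm (X a b - X a u - X u b) \<le> K * ((R a u + R u b) / 2) powr \<theta>"
  shows "xs \<in> partitions s t \<Longrightarrow> length xs = m + 2 \<Longrightarrow>
    norm (chain_sum X xs - X s t) \<le> K * zetaN m \<theta> * R s t powr \<theta>"
proof (induction m arbitrary: xs)
  case 0
  then obtain a b where "xs = [a, b]" by (auto simp: length_Suc_conv numeral_2_eq_2)
  then show ?case using 0 by (simp add: zetaN_def partitions_def)
next
  case (Suc m)
  then have "length xs = m + 3" by simp
  then obtain xs' a u b where xs': "xs' \<in> partitions s t" "length xs' = m + 2"
    and sub: "s \<le> a" "a < u" "u < b" "b \<le> t"
    and remove: "chain_sum X xs = chain_sum X xs' + (X a u + X u b - X a b)"
    and cheap: "(R a u + R u b) / 2 \<le> R s t / real (Suc m)"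
    using partition_remove_cheap_point[OF R Suc.prems(1), where X = X] by blast
  have "norm (X a b - X a u - X u b) \<le> K * ((R a u + R u b) / 2) powr \<theta>"
    by (rule defect[OF sub])
  also have "\<dots> \<le> K * (R s t / real (Suc m)) powr \<theta>"
    using cheap control_nonneg[OF R] K \<theta> by (intro mult_left_mono powr_mono2) auto
  also have "\<dots> = K * (real (Suc m) powr (- \<theta>) * R s t powr \<theta>)"
    using control_nonneg[OF R] by (simp add: powr_divide powr_minus_divide)
  finally have defect_le: "norm (X a b - X a u - X u b) \<le> \<dots>" .
  have "chain_sum X xs - X s t = (chain_sum X xs' - X s t) - (X a b - X a u - X u b)"
    unfolding remove by (simp add: algebra_simps)
  then have "norm (chain_sum X xs - X s t)
      \<le> norm (chain_sum X xs' - X s t) + norm (X a b - X a u - X u b)"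
    by (simp only: norm_triangle_ineq4)
  also have "\<dots> \<le> K * zetaN m \<theta> * R s t powr \<theta> + K * (real (Suc m) powr (- \<theta>) * R s t powr \<theta>)"
    using Suc.IH[OF xs'] defect_le by (rule add_mono)
  also have "\<dots> = K * zetaN (Suc m) \<theta> * R s t powr \<theta>"
    by (simp add: zetaN_def algebra_simps)
  finally show ?case .
qed

lemma sewing:
  fixes X :: "nat \<Rightarrow> nat \<Rightarrow> 'a::real_normed_vector"
  assumes \<theta>: "0 < \<theta>" and K: "0 \<le> K" and R: "control R"
    and defect: "\<And>a u b. s \<le> a \<Longrightarrow> a < u \<Longrightarrow> u < b \<Longrightarrow> b \<le> t \<Longrightarrow>
       norm (X a b - X a u - X u b) \<le> K * ((R a u + R u b) / 2) powr \<theta>"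
    and st: "s < t" "t - s \<le> N"
  shows "norm ((\<Sum>k\<in>{s..<t}. X k (Suc k)) - X s t) \<le> K * zetaN N \<theta> * R s t powr \<theta>"
proof -
  have "[s..<Suc t] \<in> partitions s t"
    using st by (simp add: partitions_def sorted_wrt_append)
  then have "norm (chain_sum X [s..<Suc t] - X s t) \<le> K * zetaN (t - s - 1) \<theta> * R s t powr \<theta>"
    using sewing_partition[OF \<theta> K R defect] st by simp
  also have "\<dots> \<le> K * zetaN N \<theta> * R s t powr \<theta>"
    using K st unfolding zetaN_def by (intro mult_right_mono mult_left_mono sum_mono2) auto
  finally show ?thesis using chain_sum_upt[of s t X] st by simp
qed

section \<open>The p-variation as a control\<close>

definition pvar_pow :: "real \<Rightarrow> nat \<Rightarrow> (nat \<Rightarrow> nat \<Rightarrow> real) \<Rightarrow> nat \<Rightarrow> nat \<Rightarrow> real" where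
  "pvar_pow p d y a b = (if a \<le> b then Max (pvar_sum p d y ` partitions a b) else 0)"

lemma pvar_eq_pvar_pow_powr: "a \<le> b \<Longrightarrow> pvar p d y a b = pvar_pow p d y a b powr (1 / p)"
  unfolding pvar_def pvar_pow_def by simp

lemma pvar_sum_eq_chain_sum:
  "pvar_sum p d y xs = chain_sum (\<lambda>a b. l1norm d (\<lambda>\<mu>. y b \<mu> - y a \<mu>) powr p) xs"
proof (induction xs rule: induct_list012)
  case (3 a b r)
  have "pvar_sum p d y (a # b # r) = l1norm d (\<lambda>\<mu>. y b \<mu> - y a \<mu>) powr p + pvar_sum p d y (b # r)"
    unfolding pvar_sum_def by (simp add: sum.lessThan_Suc_shift del: sum.lessThan_Suc)
  with 3 show ?case by simp
qed (simp_all add: pvar_sum_def)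

lemma finite_partitions: "finite (partitions a b)"
proof (rule finite_subset)
  show "partitions a b \<subseteq> {xs. set xs \<subseteq> {a..b} \<and> distinct xs}"
    using partitions_subset by (auto simp: partitions_def strict_sorted_iff)
qed (rule finite_subset_distinct, simp)

lemma partitions_append:
  assumes xs: "xs \<in> partitions a u" and ys: "ys \<in> partitions u b"
  shows "xs @ tl ys \<in> partitions a b"
proof -
  obtain r where r: "ys = u # r" using ys by (cases ys) (auto simp: partitions_def)
  have "v \<le> u" if "v \<in> set xs" for v using partitions_subset[OF xs] that by auto
  moreover have "u < v" if "v \<in> set r" for v using ys that r by (simp add: partitions_def)
  ultimately have "sorted_wrt (<) (xs @ r)"
    using xs ys r by (fastforce simp: partitions_def sorted_wrt_append)
  moreover have "last (xs @ r) = b"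
    using xs ys r by (cases "r = []") (auto simp: partitions_def)
  ultimately show ?thesis using xs r by (auto simp: partitions_def)
qed

lemma endpoints_in_partitions: "a \<le> b \<Longrightarrow> remdups [a, b] \<in> partitions a b"
  by (simp add: partitions_def)

lemma increment_powr_le_pvar_pow:
  assumes "a \<le> b"
  shows "l1norm d (\<lambda>\<mu>. y b \<mu> - y a \<mu>) powr p \<le> pvar_pow p d y a b"
proof -
  have "pvar_sum p d y (remdups [a, b]) \<le> Max (pvar_sum p d y ` partitions a b)"
    using endpoints_in_partitions[OF assms] by (intro Max_ge finite_imageI finite_partitions imageI)
  moreover have "pvar_sum p d y (remdups [a, b]) = l1norm d (\<lambda>\<mu>. y b \<mu> - y a \<mu>) powr p"
    by (simp add: pvar_sum_def l1norm_def)
  ultimately show ?thesis using assms unfolding pvar_pow_def by simp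
qed

lemma pvar_pow_nonneg: "0 \<le> pvar_pow p d y a b"
  using increment_powr_le_pvar_pow[of a b d y p]
  by (cases "a \<le> b") (auto simp: pvar_pow_def intro: order_trans[OF powr_ge_zero])

lemma pvar_powr_eq_pvar_pow: "0 < p \<Longrightarrow> a \<le> b \<Longrightarrow> pvar p d y a b powr p = pvar_pow p d y a b"
  using pvar_pow_nonneg[of p d y a b] by (simp add: pvar_eq_pvar_pow_powr powr_powr)

lemma pvar_pow_attained:
  assumes "a \<le> b"
  obtains xs where "xs \<in> partitions a b" "pvar_sum p d y xs = pvar_pow p d y a b"
proof -
  have "partitions a b \<noteq> {}" using endpoints_in_partitions[OF assms] by blast
  then have "Max (pvar_sum p d y ` partitions a b) \<in> pvar_sum p d y ` partitions a b"
    by (intro Max_in finite_imageI finite_partitions) simp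
  then show thesis using that assms unfolding pvar_pow_def by auto
qed

lemma pvar_pow_superadditive:
  assumes "a \<le> u" "u \<le> b"
  shows "pvar_pow p d y a u + pvar_pow p d y u b \<le> pvar_pow p d y a b"
proof -
  obtain xs ys where xs: "xs \<in> partitions a u" "pvar_sum p d y xs = pvar_pow p d y a u"
    and ys: "ys \<in> partitions u b" "pvar_sum p d y ys = pvar_pow p d y u b"
    using pvar_pow_attained assms by metis
  have "pvar_sum p d y (xs @ tl ys) = pvar_sum p d y xs + pvar_sum p d y ys"
    using xs(1) ys(1) unfolding pvar_sum_eq_chain_sum
    by (intro chain_sum_append) (auto simp: partitions_def)
  moreover have "pvar_sum p d y (xs @ tl ys) \<le> Max (pvar_sum p d y ` partitions a b)"
    using partitions_append[OF xs(1) ys(1)] by (intro Max_ge finite_imageI finite_partitions imageI)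
  ultimately show ?thesis using xs ys assms unfolding pvar_pow_def by simp
qed

lemma control_pvar_pow: "control (pvar_pow p d y)"
  unfolding control_def using pvar_pow_nonneg pvar_pow_superadditive by blast

section \<open>Maps of class C^2_b\<close>

lemma C2b_bounded_norm_le: "C2b_bounded g L \<Longrightarrow> norm (g y) \<le> L"
  unfolding C2b_bounded_def by blast

lemma C2b_bounded_lipschitz:
  "C2b_bounded g L \<Longrightarrow> norm (g y - g z) \<le> L * norm (y - z)"
  unfolding C2b_bounded_def
  by (elim exE conjE, rule differentiable_bound[where S = UNIV])
     (auto simp: norm_blinfun.rep_eq[symmetric])

lemma C2b_bounded_second_difference:
  fixes g :: "'a::real_normed_vector \<Rightarrow> 'a"
  assumes "C2b_bounded g L"
  shows "norm (g (A + \<alpha>) - g A - g (B + \<beta>) + g B) \<le> L * norm (\<alpha> - \<beta>) + L * norm \<beta> * norm (A - B)"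
proof -
  obtain Dg D2g where
    Dg: "\<And>x. (g has_derivative blinfun_apply (Dg x)) (at x)" and
    D2g: "\<And>x. (Dg has_derivative blinfun_apply (D2g x)) (at x)" and
    bounds: "\<And>x. norm (Dg x) \<le> L \<and> norm (D2g x) \<le> L"
    using assms unfolding C2b_bounded_def by blast
  have "norm (Dg y - Dg z) \<le> L * norm (y - z)" for y z
    by (rule differentiable_bound[where S = UNIV and f' = "\<lambda>x. blinfun_apply (D2g x)"])
       (use D2g bounds in \<open>auto simp: norm_blinfun.rep_eq[symmetric]\<close>)
  then have Dg_lipschitz: "norm (Dg (x + \<beta>) - Dg x) \<le> L * norm \<beta>" for x
    by (metis add_diff_cancel_left')
  define G where "G y = g (y + \<beta>) - g y" for y
  have "(G has_derivative blinfun_apply (Dg (y + \<beta>) - Dg y)) (at y)" for y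
  proof -
    have "((\<lambda>y. g (y + \<beta>)) has_derivative blinfun_apply (Dg (y + \<beta>))) (at y)"
      using has_derivative_compose[OF has_derivative_add_const[OF has_derivative_ident] Dg]
      by simp
    then have "(G has_derivative (\<lambda>h. Dg (y + \<beta>) h - Dg y h)) (at y)"
      unfolding G_def by (intro has_derivative_diff Dg)
    moreover have "blinfun_apply (Dg (y + \<beta>) - Dg y) = (\<lambda>h. Dg (y + \<beta>) h - Dg y h)"
      by (rule ext) (simp add: blinfun.diff_left)
    ultimately show ?thesis by simp
  qed
  then have G_lipschitz: "norm (G A - G B) \<le> L * norm \<beta> * norm (A - B)"
    using Dg_lipschitz
    by (intro differentiable_bound[where S = UNIV]) (auto simp: norm_blinfun.rep_eq[symmetric])
  have g_lipschitz: "norm (g (A + \<alpha>) - g (A + \<beta>)) \<le> L * norm (\<alpha> - \<beta>)"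
    using C2b_bounded_lipschitz[OF assms, of "A + \<alpha>" "A + \<beta>"] by simp
  have "g (A + \<alpha>) - g A - g (B + \<beta>) + g B = (g (A + \<alpha>) - g (A + \<beta>)) + (G A - G B)"
    unfolding G_def by (simp add: algebra_simps)
  then show ?thesis
    using norm_triangle_ineq[of "g (A + \<alpha>) - g (A + \<beta>)" "G A - G B"] G_lipschitz g_lipschitz
    by (simp only:)
qed

lemma norm_sum_scaleR_le_l1norm:
  fixes g :: "nat \<Rightarrow> 'a::real_normed_vector"
  assumes "\<And>\<mu>. \<mu> < d \<Longrightarrow> norm (g \<mu>) \<le> G"
  shows "norm (\<Sum>\<mu><d. c \<mu> *\<^sub>R g \<mu>) \<le> G * l1norm d c"
proof -
  have "norm (\<Sum>\<mu><d. c \<mu> *\<^sub>R g \<mu>) \<le> (\<Sum>\<mu><d. \<bar>c \<mu>\<bar> * norm (g \<mu>))"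
    by (rule norm_sum[THEN order_trans]) simp
  also have "\<dots> \<le> (\<Sum>\<mu><d. \<bar>c \<mu>\<bar> * G)"
    using assms by (intro sum_mono mult_left_mono) auto
  finally show ?thesis by (simp add: l1norm_def sum_distrib_left mult.commute)
qed

lemma le_powr_inverse_of_powr_le:
  fixes y z p :: real
  assumes "0 < p" "0 \<le> y" "y powr p \<le> z"
  shows "y \<le> z powr (1 / p)"
  using powr_mono2[of "1 / p" "y powr p" z] assms by (simp add: powr_powr)

lemma scaled_increment_le_powr:
  assumes "0 < p" "0 \<le> L" "L powr p * l1norm d (\<lambda>\<mu>. y b \<mu> - y a \<mu>) powr p \<le> R"
  shows "L * l1norm d (\<lambda>\<mu>. y b \<mu> - y a \<mu>) \<le> R powr (1 / p)"
  by (rule le_powr_inverse_of_powr_le) (use assms in \<open>auto simp: powr_mult l1norm_def\<close>)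

lemma powr_le_powr_mult_powr:
  fixes x X r p :: real
  assumes "0 < p" "0 \<le> x" "0 \<le> X" "0 \<le> r" "x \<le> X * r"
  shows "x powr (1 / p) \<le> X powr (1 / p) * r powr (1 / p)"
  using powr_mono2[of "1 / p" x "X * r"] assms by (simp add: powr_mult)

lemma powr_mult_powr_le_mean_powr:
  fixes y z p :: real
  assumes "0 < p" "0 \<le> y" "0 \<le> z"
  shows "y powr (1 / p) * z powr (1 / p) \<le> ((y + z) / 2) powr (2 / p)"
proof -
  have "y * z \<le> ((y + z) / 2) ^ 2"
    using zero_le_power2[of "y - z"] by (simp add: power2_eq_square field_simps)
  then have "(y * z) powr (1 / p) \<le> (((y + z) / 2) ^ 2) powr (1 / p)"
    using assms by (intro powr_mono2) auto
  then show ?thesis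
    using assms by (simp add: powr_mult powr_powr flip: powr_numeral)
qed

lemma exp_2_ge_5: "5 \<le> exp (2::real)"
proof -
  have "(5::real) \<le> (3 / 2) ^ 4" by (simp add: power_divide)
  also have "(3 / 2) ^ 4 \<le> exp (1 / 2 :: real) ^ 4"
    using exp_ge_add_one_self[of "1 / 2"] by (intro power_mono) auto
  also have "\<dots> = exp 2" by (simp flip: exp_of_nat_mult)
  finally show ?thesis .
qed

lemma jump_factor_le_exp:
  fixes A \<omega> c p :: real
  assumes c: "3 \<le> c" and p: "1 \<le> p" and A: "0 \<le> A" "A powr p \<le> \<omega>" and \<omega>: "2 / c < \<omega>"
  shows "5 / 2 * (1 + A) \<le> exp (c * \<omega>)"
proof (cases "A \<le> 1")
  case True
  have "5 / 2 * (1 + A) \<le> exp 2" using True exp_2_ge_5 by simp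
  also have "\<dots> \<le> exp (c * \<omega>)" using \<omega> c by (simp add: field_simps)
  finally show ?thesis .
next
  case False
  then have "A \<le> \<omega>" using A powr_mono[OF p, of A] by simp
  then have "3 * A \<le> c * \<omega>"
    using c A by (intro mult_mono) auto
  then have "A + 2 \<le> c * \<omega>"
    using False by linarith
  have "5 / 2 * (1 + A) \<le> (1 + A) * 5" using A by simp
  also have "\<dots> \<le> exp A * exp 2"
    using exp_ge_add_one_self[of A] exp_2_ge_5 A by (intro mult_mono) auto
  also have "\<dots> \<le> exp (c * \<omega>)" using \<open>A + 2 \<le> c * \<omega>\<close> by (simp flip: exp_add)
  finally show ?thesis .
qed

section \<open>The Euler scheme\<close>

locale euler_scheme =
  fixes L :: real and N d :: nat and f :: "nat \<Rightarrow> 'a::real_normed_vector \<Rightarrow> 'a"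
    and z :: "nat \<Rightarrow> nat \<Rightarrow> real" and y :: "nat \<Rightarrow> 'a"
  assumes L_pos: "0 < L"
    and f_C2b: "\<And>\<mu>. \<mu> < d \<Longrightarrow> C2b_bounded (f \<mu>) L"
    and step: "\<And>k. k < N \<Longrightarrow>
      y (Suc k) = y k + (\<Sum>\<mu><d. (z (Suc k) \<mu> - z k \<mu>) *\<^sub>R f \<mu> (y k))"
begin

definition germ :: "nat \<Rightarrow> nat \<Rightarrow> 'a" where
  "germ a b = (\<Sum>\<mu><d. (z b \<mu> - z a \<mu>) *\<^sub>R f \<mu> (y a))"

lemma germ_telescope:
  assumes "a \<le> b" "b \<le> N"
  shows "(\<Sum>k\<in>{a..<b}. germ k (Suc k)) = y b - y a"
proof -
  have "(\<Sum>k\<in>{a..<b}. germ k (Suc k)) = (\<Sum>k\<in>{a..<b}. y (Suc k) - y k)"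
    using assms by (intro sum.cong) (auto simp: germ_def step)
  also have "\<dots> = y b - y a" using assms(1) by (rule sum_Suc_diff')
  finally show ?thesis .
qed

lemma germ_defect:
  "germ a b - germ a u - germ u b = (\<Sum>\<mu><d. (z b \<mu> - z u \<mu>) *\<^sub>R (f \<mu> (y a) - f \<mu> (y u)))"
  unfolding germ_def by (simp add: sum_subtractf[symmetric] algebra_simps)

lemma norm_germ_le: "norm (germ a b) \<le> L * l1norm d (\<lambda>\<mu>. z b \<mu> - z a \<mu>)"
  unfolding germ_def
  by (rule norm_sum_scaleR_le_l1norm) (use C2b_bounded_norm_le[OF f_C2b] in auto)

lemma norm_germ_defect_le:
  "norm (germ a b - germ a u - germ u b)
     \<le> norm (y u - y a) * (L * l1norm d (\<lambda>\<mu>. z b \<mu> - z u \<mu>))"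
proof -
  have "norm (germ a b - germ a u - germ u b)
      \<le> L * norm (y u - y a) * l1norm d (\<lambda>\<mu>. z b \<mu> - z u \<mu>)"
    unfolding germ_defect
    by (rule norm_sum_scaleR_le_l1norm)
       (use C2b_bounded_lipschitz[OF f_C2b] in \<open>simp add: norm_minus_commute\<close>)
  then show ?thesis by (simp add: mult_ac)
qed

text \<open>Induction on b - a: the bound on shorter intervals controls the defect of the germ,
  and the smallness of the control on [s,t] absorbs the sewing remainder.\<close>
lemma increment_bound:
  assumes p: "1 \<le> p" and R: "control R"
    and z_R: "\<And>a b. a \<le> b \<Longrightarrow> L * l1norm d (\<lambda>\<mu>. z b \<mu> - z a \<mu>) \<le> R a b powr (1 / p)"
    and t: "t \<le> N" and small: "R s t powr (1 / p) \<le> \<delta>"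
    and \<delta>: "2 * zetaN N (2 / p) * \<delta> \<le> 1"
  shows "s \<le> a \<Longrightarrow> a \<le> b \<Longrightarrow> b \<le> t \<Longrightarrow> norm (y b - y a) \<le> 2 * R a b powr (1 / p)"
proof (induction "b - a" arbitrary: a b rule: less_induct)
  case less
  show ?case
  proof (cases "a = b")
    case False
    then have ab: "a < b" using less.prems by simp
    have defect: "norm (germ a' b' - germ a' u - germ u b') \<le> 2 * ((R a' u + R u b') / 2) powr (2 / p)"
      if "a \<le> a'" "a' < u" "u < b'" "b' \<le> b" for a' u b'
    proof -
      have "norm (germ a' b' - germ a' u - germ u b')
          \<le> norm (y u - y a') * (L * l1norm d (\<lambda>\<mu>. z b' \<mu> - z u \<mu>))"
        by (rule norm_germ_defect_le)
      also have "\<dots> \<le> (2 * R a' u powr (1 / p)) * R u b' powr (1 / p)"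
        using less.hyps[of u a'] that less.prems z_R[of u b'] L_pos
        by (intro mult_mono) (auto simp: l1norm_def)
      also have "\<dots> \<le> 2 * ((R a' u + R u b') / 2) powr (2 / p)"
        using powr_mult_powr_le_mean_powr[of p "R a' u" "R u b'"] control_nonneg[OF R] p by auto
      finally show ?thesis .
    qed
    define r where "r = R a b powr (1 / p)"
    have r_nonneg: "0 \<le> r" unfolding r_def by simp
    have "r \<le> R s t powr (1 / p)"
      unfolding r_def using control_mono[OF R, of s a b t] control_nonneg[OF R] less.prems p
      by (intro powr_mono2) auto
    then have "r \<le> \<delta>" using small by linarith
    have "norm ((\<Sum>k\<in>{a..<b}. germ k (Suc k)) - germ a b) \<le> 2 * zetaN N (2 / p) * R a b powr (2 / p)"
      by (rule sewing[OF _ _ R defect]) (use p ab less.prems t in auto)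
    then have "norm (y b - y a - germ a b) \<le> 2 * zetaN N (2 / p) * R a b powr (2 / p)"
      using germ_telescope[of a b] ab less.prems t by simp
    also have "R a b powr (2 / p) = r * r"
      unfolding r_def by (simp flip: powr_add add_divide_distrib)
    finally have "norm (y b - y a) \<le> r + 2 * zetaN N (2 / p) * r * r"
      using norm_germ_le[of a b] z_R[of a b] ab norm_triangle_ineq[of "germ a b" "y b - y a - germ a b"]
      unfolding r_def by (simp add: mult_ac)
    also have "\<dots> \<le> r + (2 * zetaN N (2 / p) * \<delta>) * r"
      using \<open>r \<le> \<delta>\<close> r_nonneg zetaN_nonneg by (intro add_left_mono mult_left_mono mult_right_mono) auto
    also have "\<dots> \<le> r + 1 * r" using \<delta> r_nonneg by (intro add_left_mono mult_right_mono)
    also have "\<dots> = 2 * r" by simp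
    finally show ?thesis unfolding r_def .
  qed simp
qed

end

section \<open>Stability\<close>

locale euler_pair =
  X: euler_scheme L N d f w x + Xt: euler_scheme L N d f wt xt
  for L N d f w wt x xt +
  fixes p :: real
  assumes p_ge_1: "1 \<le> p"
begin

definition omega :: "nat \<Rightarrow> nat \<Rightarrow> real" where
  "omega a b = L powr p * (pvar_pow p d w a b + pvar_pow p d wt a b)"

definition omega_diff :: "nat \<Rightarrow> nat \<Rightarrow> real" where
  "omega_diff a b = L powr p * pvar_pow p d (\<lambda>k \<mu>. w k \<mu> - wt k \<mu>) a b"

definition W :: "nat \<Rightarrow> nat \<Rightarrow> real" where "W a b = omega a b powr (1 / p)"

definition V :: "nat \<Rightarrow> nat \<Rightarrow> real" where "V a b = omega_diff a b powr (1 / p)"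

definition e :: "nat \<Rightarrow> 'a" where "e k = x k - xt k"

lemma p_pos: "0 < p"
  using p_ge_1 by simp

lemma control_omega: "control omega"
  unfolding omega_def
  using control_lincomb[OF control_pvar_pow control_pvar_pow, of "L powr p" "L powr p"]
  by (simp add: algebra_simps)

lemma control_omega_diff: "control omega_diff"
  unfolding omega_diff_def using control_lincomb[OF control_pvar_pow control_pvar_pow, of "L powr p" 0]
  by simp

lemma W_nonneg: "0 \<le> W a b" and V_nonneg: "0 \<le> V a b"
  unfolding W_def V_def by simp_all

lemma W_mono: "a' \<le> a \<Longrightarrow> a \<le> b \<Longrightarrow> b \<le> b' \<Longrightarrow> W a b \<le> W a' b'"
  unfolding W_def using control_mono[OF control_omega] control_nonneg[OF control_omega] p_pos
  by (intro powr_mono2) auto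

lemma V_mono: "a' \<le> a \<Longrightarrow> a \<le> b \<Longrightarrow> b \<le> b' \<Longrightarrow> V a b \<le> V a' b'"
  unfolding V_def using control_mono[OF control_omega_diff] control_nonneg[OF control_omega_diff] p_pos
  by (intro powr_mono2) auto

lemma w_increment_le_W: "a \<le> b \<Longrightarrow> L * l1norm d (\<lambda>\<mu>. w b \<mu> - w a \<mu>) \<le> W a b"
  unfolding W_def omega_def
  by (rule scaled_increment_le_powr)
     (use increment_powr_le_pvar_pow[of a b d w p] pvar_pow_nonneg[of p d wt a b] X.L_pos p_pos
      in \<open>auto simp: distrib_left intro: add_increasing2\<close>)

lemma wt_increment_le_W: "a \<le> b \<Longrightarrow> L * l1norm d (\<lambda>\<mu>. wt b \<mu> - wt a \<mu>) \<le> W a b"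
  unfolding W_def omega_def
  by (rule scaled_increment_le_powr)
     (use increment_powr_le_pvar_pow[of a b d wt p] pvar_pow_nonneg[of p d w a b] X.L_pos p_pos
      in \<open>auto simp: distrib_left intro: add_increasing\<close>)

lemma diff_increment_le_V:
  "a \<le> b \<Longrightarrow> L * l1norm d (\<lambda>\<mu>. (w b \<mu> - wt b \<mu>) - (w a \<mu> - wt a \<mu>)) \<le> V a b"
  unfolding V_def omega_diff_def
  by (rule scaled_increment_le_powr)
     (use increment_powr_le_pvar_pow[of a b d "\<lambda>k \<mu>. w k \<mu> - wt k \<mu>" p] X.L_pos p_pos in auto)

lemma xt_increment_bound:
  assumes "t \<le> N" "W s t \<le> \<delta>" "2 * zetaN N (2 / p) * \<delta> \<le> 1" "s \<le> a" "a \<le> b" "b \<le> t"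
  shows "norm (xt b - xt a) \<le> 2 * W a b"
  using Xt.increment_bound[OF p_ge_1 control_omega wt_increment_le_W[unfolded W_def]] assms
  unfolding W_def by blast

lemma e_telescope:
  "a \<le> b \<Longrightarrow> b \<le> N \<Longrightarrow> (\<Sum>k\<in>{a..<b}. X.germ k (Suc k) - Xt.germ k (Suc k)) = e b - e a"
  unfolding sum_subtractf e_def by (simp add: X.germ_telescope Xt.germ_telescope)

lemma germ_diff_eq:
  "X.germ a b - Xt.germ a b = (\<Sum>\<mu><d. (w b \<mu> - w a \<mu>) *\<^sub>R (f \<mu> (x a) - f \<mu> (xt a)))
     + (\<Sum>\<mu><d. ((w b \<mu> - wt b \<mu>) - (w a \<mu> - wt a \<mu>)) *\<^sub>R f \<mu> (xt a))"
  unfolding X.germ_def Xt.germ_def sum_subtractf[symmetric] sum.distrib[symmetric]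
  by (intro sum.cong refl) (simp add: algebra_simps)

lemma norm_germ_diff_le:
  assumes "a \<le> b"
  shows "norm (X.germ a b - Xt.germ a b) \<le> norm (e a) * W a b + V a b"
proof -
  have "norm (\<Sum>\<mu><d. (w b \<mu> - w a \<mu>) *\<^sub>R (f \<mu> (x a) - f \<mu> (xt a)))
      \<le> (L * norm (e a)) * l1norm d (\<lambda>\<mu>. w b \<mu> - w a \<mu>)"
    by (rule norm_sum_scaleR_le_l1norm) (use C2b_bounded_lipschitz[OF X.f_C2b] in \<open>simp add: e_def\<close>)
  also have "\<dots> = norm (e a) * (L * l1norm d (\<lambda>\<mu>. w b \<mu> - w a \<mu>))" by simp
  also have "\<dots> \<le> norm (e a) * W a b"
    using w_increment_le_W[OF assms] by (intro mult_left_mono) auto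
  finally have "norm (\<Sum>\<mu><d. (w b \<mu> - w a \<mu>) *\<^sub>R (f \<mu> (x a) - f \<mu> (xt a))) \<le> \<dots>" .
  moreover have "norm (\<Sum>\<mu><d. ((w b \<mu> - wt b \<mu>) - (w a \<mu> - wt a \<mu>)) *\<^sub>R f \<mu> (xt a))
      \<le> L * l1norm d (\<lambda>\<mu>. (w b \<mu> - wt b \<mu>) - (w a \<mu> - wt a \<mu>))"
    by (rule norm_sum_scaleR_le_l1norm) (use C2b_bounded_norm_le[OF X.f_C2b] in auto)
  moreover note diff_increment_le_V[OF assms]
  ultimately show ?thesis
    unfolding germ_diff_eq
    using norm_triangle_ineq[of "\<Sum>\<mu><d. (w b \<mu> - w a \<mu>) *\<^sub>R (f \<mu> (x a) - f \<mu> (xt a))"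
        "\<Sum>\<mu><d. ((w b \<mu> - wt b \<mu>) - (w a \<mu> - wt a \<mu>)) *\<^sub>R f \<mu> (xt a)"]
    by linarith
qed

lemma norm_second_difference_le:
  assumes "\<mu> < d"
  shows "norm (f \<mu> (x a) - f \<mu> (x u) - f \<mu> (xt a) + f \<mu> (xt u))
    \<le> L * (norm (e u - e a) + norm (xt u - xt a) * norm (e a))"
proof -
  have "f \<mu> (x a) - f \<mu> (x u) - f \<mu> (xt a) + f \<mu> (xt u)
      = - (f \<mu> (x a + (x u - x a)) - f \<mu> (x a) - f \<mu> (xt a + (xt u - xt a)) + f \<mu> (xt a))"
    by (simp add: algebra_simps)
  then have "norm (f \<mu> (x a) - f \<mu> (x u) - f \<mu> (xt a) + f \<mu> (xt u))
      = norm (f \<mu> (x a + (x u - x a)) - f \<mu> (x a) - f \<mu> (xt a + (xt u - xt a)) + f \<mu> (xt a))"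
    by (simp only: norm_minus_cancel)
  also have "\<dots> \<le> L * norm ((x u - x a) - (xt u - xt a)) + L * norm (xt u - xt a) * norm (x a - xt a)"
    by (rule C2b_bounded_second_difference[OF X.f_C2b[OF assms]])
  finally show ?thesis unfolding e_def by (simp add: algebra_simps)
qed

lemma germ_diff_defect_eq:
  "(X.germ a b - Xt.germ a b) - (X.germ a u - Xt.germ a u) - (X.germ u b - Xt.germ u b)
   = (\<Sum>\<mu><d. (w b \<mu> - w u \<mu>) *\<^sub>R (f \<mu> (x a) - f \<mu> (x u) - f \<mu> (xt a) + f \<mu> (xt u)))
     + (\<Sum>\<mu><d. ((w b \<mu> - wt b \<mu>) - (w u \<mu> - wt u \<mu>)) *\<^sub>R (f \<mu> (xt a) - f \<mu> (xt u)))"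
proof -
  have "(X.germ a b - Xt.germ a b) - (X.germ a u - Xt.germ a u) - (X.germ u b - Xt.germ u b)
      = (X.germ a b - X.germ a u - X.germ u b) - (Xt.germ a b - Xt.germ a u - Xt.germ u b)"
    by (simp add: algebra_simps)
  then show ?thesis
    unfolding X.germ_defect Xt.germ_defect sum_subtractf[symmetric] sum.distrib[symmetric]
    by (simp add: algebra_simps)
qed

lemma germ_diff_defect_le:
  assumes e_incr: "norm (e u - e a) \<le> 2 * M * W a u + 2 * V a u"
    and xt_incr: "norm (xt u - xt a) \<le> 2 * W a u" and e_a: "norm (e a) \<le> M"
    and "u \<le> b"
  shows "norm ((X.germ a b - Xt.germ a b) - (X.germ a u - Xt.germ a u) - (X.germ u b - Xt.germ u b))
    \<le> (4 * M * W a u + 2 * V a u) * W u b + 2 * W a u * V u b"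
proof -
  define D where "D \<mu> = f \<mu> (x a) - f \<mu> (x u) - f \<mu> (xt a) + f \<mu> (xt u)" for \<mu>
  define S1 where "S1 = (\<Sum>\<mu><d. (w b \<mu> - w u \<mu>) *\<^sub>R D \<mu>)"
  define S2 where "S2 = (\<Sum>\<mu><d. ((w b \<mu> - wt b \<mu>) - (w u \<mu> - wt u \<mu>)) *\<^sub>R (f \<mu> (xt a) - f \<mu> (xt u)))"
  have M_nonneg: "0 \<le> M" using e_a norm_ge_zero order_trans by blast
  have "norm (D \<mu>) \<le> L * (4 * M * W a u + 2 * V a u)" if "\<mu> < d" for \<mu>
  proof -
    have "norm (D \<mu>) \<le> L * (norm (e u - e a) + norm (xt u - xt a) * norm (e a))"
      unfolding D_def by (rule norm_second_difference_le[OF that])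
    also have "\<dots> \<le> L * ((2 * M * W a u + 2 * V a u) + 2 * W a u * M)"
      using e_incr xt_incr e_a X.L_pos W_nonneg[of a u]
      by (intro mult_left_mono add_mono mult_mono) auto
    finally show ?thesis by (simp add: algebra_simps)
  qed
  then have "norm S1 \<le> L * (4 * M * W a u + 2 * V a u) * l1norm d (\<lambda>\<mu>. w b \<mu> - w u \<mu>)"
    unfolding S1_def by (rule norm_sum_scaleR_le_l1norm)
  also have "\<dots> = (4 * M * W a u + 2 * V a u) * (L * l1norm d (\<lambda>\<mu>. w b \<mu> - w u \<mu>))"
    by simp
  also have "\<dots> \<le> (4 * M * W a u + 2 * V a u) * W u b"
    using w_increment_le_W[OF assms(4)] M_nonneg W_nonneg[of a u] V_nonneg[of a u]
    by (intro mult_left_mono) auto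
  finally have S1_le: "norm S1 \<le> \<dots>" .
  have "norm S2 \<le> (L * norm (xt u - xt a))
      * l1norm d (\<lambda>\<mu>. (w b \<mu> - wt b \<mu>) - (w u \<mu> - wt u \<mu>))"
    unfolding S2_def
    by (rule norm_sum_scaleR_le_l1norm)
       (use C2b_bounded_lipschitz[OF X.f_C2b] in \<open>simp add: norm_minus_commute\<close>)
  also have "\<dots> = norm (xt u - xt a) * (L * l1norm d (\<lambda>\<mu>. (w b \<mu> - wt b \<mu>) - (w u \<mu> - wt u \<mu>)))"
    by simp
  also have "\<dots> \<le> 2 * W a u * V u b"
    using xt_incr diff_increment_le_V[OF assms(4)] W_nonneg[of a u] X.L_pos
    by (intro mult_mono) (auto simp: l1norm_def)
  finally have S2_le: "norm S2 \<le> \<dots>" .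
  show ?thesis
    unfolding germ_diff_defect_eq using norm_triangle_ineq[of S1 S2] S1_le S2_le
    unfolding S1_def S2_def D_def by linarith
qed

lemma germ_diff_defect_le_normalized:
  assumes \<rho>: "control \<rho>"
    and W_\<rho>: "\<And>a' b'. a \<le> a' \<Longrightarrow> a' \<le> b' \<Longrightarrow> b' \<le> b \<Longrightarrow> omega a' b' \<le> omega a b * \<rho> a' b'"
    and V_\<rho>: "\<And>a' b'. a \<le> a' \<Longrightarrow> a' \<le> b' \<Longrightarrow> b' \<le> b \<Longrightarrow> omega_diff a' b' \<le> omega_diff a b * \<rho> a' b'"
    and sub: "a \<le> a'" "a' < u" "u < b'" "b' \<le> b"
    and e_incr: "norm (e u - e a') \<le> 2 * M * W a' u + 2 * V a' u"
    and xt_incr: "norm (xt u - xt a') \<le> 2 * W a' u" and e_a': "norm (e a') \<le> M"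
  shows "norm ((X.germ a' b' - Xt.germ a' b') - (X.germ a' u - Xt.germ a' u) - (X.germ u b' - Xt.germ u b'))
    \<le> (4 * M * W a b ^ 2 + 4 * V a b * W a b) * ((\<rho> a' u + \<rho> u b') / 2) powr (2 / p)"
proof -
  define r1 where "r1 = \<rho> a' u powr (1 / p)"
  define r2 where "r2 = \<rho> u b' powr (1 / p)"
  have M_nonneg: "0 \<le> M" using e_a' norm_ge_zero order_trans by blast
  have r_nonneg: "0 \<le> r1" "0 \<le> r2" unfolding r1_def r2_def by simp_all
  have "W a' u \<le> W a b * r1" "W u b' \<le> W a b * r2" "V a' u \<le> V a b * r1" "V u b' \<le> V a b * r2"
    unfolding W_def V_def r1_def r2_def using sub p_pos W_\<rho> V_\<rho>
      control_nonneg[OF \<rho>] control_nonneg[OF control_omega] control_nonneg[OF control_omega_diff]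
    by (auto intro!: powr_le_powr_mult_powr)
  then have "(4 * M * W a' u + 2 * V a' u) * W u b' + 2 * W a' u * V u b'
      \<le> (4 * M * (W a b * r1) + 2 * (V a b * r1)) * (W a b * r2) + 2 * (W a b * r1) * (V a b * r2)"
    using M_nonneg r_nonneg W_nonneg V_nonneg
    by (intro add_mono mult_mono mult_left_mono) (auto intro!: add_nonneg_nonneg mult_nonneg_nonneg)
  also have "\<dots> = (4 * M * W a b ^ 2 + 4 * V a b * W a b) * (r1 * r2)"
    by (simp add: algebra_simps power2_eq_square)
  also have "\<dots> \<le> (4 * M * W a b ^ 2 + 4 * V a b * W a b) * ((\<rho> a' u + \<rho> u b') / 2) powr (2 / p)"
    unfolding r1_def r2_def using powr_mult_powr_le_mean_powr[OF p_pos] control_nonneg[OF \<rho>]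
      M_nonneg W_nonneg V_nonneg by (intro mult_left_mono) auto
  finally show ?thesis
    using germ_diff_defect_le[OF e_incr xt_incr e_a'] sub by (meson less_imp_le order_trans)
qed

text \<open>The defect is sewn with respect to a control
  normalized on the current interval [a,b], so that the sewing constant carries the factor
  W a b twice and the smallness of W a b closes the induction.\<close>
lemma e_increment_bound:
  assumes t: "t \<le> N" and small: "W s t \<le> \<delta>"
    and \<delta>_zeta: "2 * zetaN N (2 / p) * \<delta> \<le> 1" and \<delta>_C: "4 * CpN p N * \<delta> \<le> 1"
    and M: "\<And>k. s \<le> k \<Longrightarrow> k \<le> t \<Longrightarrow> norm (e k) \<le> M"
  shows "s \<le> a \<Longrightarrow> a \<le> b \<Longrightarrow> b \<le> t \<Longrightarrow> norm (e b - e a) \<le> 2 * M * W a b + 2 * V a b"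
proof (induction "b - a" arbitrary: a b rule: less_induct)
  case less
  have M_nonneg: "0 \<le> M" using M[of a] less.prems by (meson norm_ge_zero order_trans)
  show ?case
  proof (cases "a = b")
    case True
    then show ?thesis using M_nonneg W_nonneg[of a b] V_nonneg[of a b] by simp
  next
    case False
    then have ab: "a < b" using less.prems by simp
    define \<Xi> where "\<Xi> a' b' = X.germ a' b' - Xt.germ a' b'" for a' b'
    define K where "K = 4 * M * W a b ^ 2 + 4 * V a b * W a b"
    have K_nonneg: "0 \<le> K" unfolding K_def using M_nonneg W_nonneg V_nonneg by simp
    obtain \<rho> where \<rho>: "control \<rho>" "\<rho> a b \<le> 2"
      and "\<And>a' b'. a \<le> a' \<Longrightarrow> a' \<le> b' \<Longrightarrow> b' \<le> b \<Longrightarrow> omega a' b' \<le> omega a b * \<rho> a' b'"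
      and "\<And>a' b'. a \<le> a' \<Longrightarrow> a' \<le> b' \<Longrightarrow> b' \<le> b \<Longrightarrow> omega_diff a' b' \<le> omega_diff a b * \<rho> a' b'"
      using obtain_normalized_control[OF control_omega control_omega_diff] by blast
    then have "norm (\<Xi> a' b' - \<Xi> a' u - \<Xi> u b') \<le> K * ((\<rho> a' u + \<rho> u b') / 2) powr (2 / p)"
      if "a \<le> a'" "a' < u" "u < b'" "b' \<le> b" for a' u b'
      unfolding \<Xi>_def K_def using that less.prems t small \<delta>_zeta
      by (intro germ_diff_defect_le_normalized less.hyps M xt_increment_bound[OF t small \<delta>_zeta]) auto
    then have "norm ((\<Sum>k\<in>{a..<b}. \<Xi> k (Suc k)) - \<Xi> a b) \<le> K * zetaN N (2 / p) * \<rho> a b powr (2 / p)"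
      by (intro sewing[OF _ K_nonneg \<rho>(1)]) (use p_pos ab less.prems t in auto)
    also have "\<dots> \<le> K * CpN p N"
      unfolding CpN_def using \<rho> p_pos K_nonneg zetaN_nonneg
      by (simp add: mult_left_mono mult_right_mono powr_mono2 control_nonneg mult_ac)
    also have "\<dots> = (4 * CpN p N * W a b) * (M * W a b + V a b)"
      unfolding K_def by (simp add: algebra_simps power2_eq_square)
    also have "\<dots> \<le> 1 * (M * W a b + V a b)"
    proof (rule mult_right_mono)
      have "W a b \<le> \<delta>" using W_mono[of s a b t] less.prems small by simp
      then have "4 * CpN p N * W a b \<le> 4 * CpN p N * \<delta>"
        unfolding CpN_def using zetaN_nonneg by (intro mult_left_mono) auto
      then show "4 * CpN p N * W a b \<le> 1" using \<delta>_C by simp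
    qed (use M_nonneg W_nonneg V_nonneg in simp)
    finally have "norm ((e b - e a) - \<Xi> a b) \<le> M * W a b + V a b"
      using e_telescope[of a b] ab less.prems t unfolding \<Xi>_def by simp
    moreover have "norm (e a) * W a b \<le> M * W a b"
      using M[of a] less.prems W_nonneg[of a b] by (intro mult_right_mono) auto
    then have "norm (\<Xi> a b) \<le> M * W a b + V a b"
      using norm_germ_diff_le[of a b] ab unfolding \<Xi>_def by linarith
    ultimately show ?thesis
      using norm_triangle_ineq[of "\<Xi> a b" "(e b - e a) - \<Xi> a b"] by simp
  qed
qed

lemma e_bound_on_small_interval:
  assumes st: "s \<le> t" "t \<le> N" and small: "W s t \<le> \<delta>"
    and \<delta>_zeta: "2 * zetaN N (2 / p) * \<delta> \<le> 1" and \<delta>_C: "4 * CpN p N * \<delta> \<le> 1"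
    and \<delta>: "4 * \<delta> \<le> 1"
    and k: "s \<le> k" "k \<le> t"
  shows "norm (e k) \<le> 2 * norm (e s) + 4 * V s t"
proof -
  define M where "M = Max ((\<lambda>k. norm (e k)) ` {s..t})"
  have M: "norm (e k) \<le> M" if "s \<le> k" "k \<le> t" for k
    unfolding M_def using that by (intro Max_ge) auto
  obtain k0 where k0: "s \<le> k0" "k0 \<le> t" "norm (e k0) = M"
    using Max_in[of "(\<lambda>k. norm (e k)) ` {s..t}"] st unfolding M_def by fastforce
  have "norm (e k0 - e s) \<le> 2 * M * W s k0 + 2 * V s k0"
    using e_increment_bound[OF st(2) small \<delta>_zeta \<delta>_C M] k0 by simp
  also have "\<dots> \<le> 2 * M * \<delta> + 2 * V s t"
    using W_mono[of s s k0 t] V_mono[of s s k0 t] k0 small norm_ge_zero[of "e k0"]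
    by (intro add_mono mult_left_mono) auto
  finally have "M \<le> norm (e s) + 2 * M * \<delta> + 2 * V s t"
    using norm_triangle_ineq[of "e s" "e k0 - e s"] k0 by simp
  moreover have "M * (4 * \<delta>) \<le> M" using \<delta> k0 norm_ge_zero[of "e k0"] by (simp add: mult_left_le)
  ultimately show ?thesis using M[OF k] by linarith
qed

definition Y :: "nat \<Rightarrow> real" where "Y k = norm (e k) + 4 * V 0 N"

lemma Y_nonneg: "0 \<le> Y k"
  unfolding Y_def using V_nonneg by simp

lemma Y_Suc_le:
  assumes "u < N"
  shows "Y (Suc u) \<le> 5 / 4 * (1 + W u (Suc u)) * Y u"
proof -
  have "e (Suc u) = e u + (X.germ u (Suc u) - Xt.germ u (Suc u))"
    using e_telescope[of u "Suc u"] assms by (simp add: algebra_simps)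
  then have "norm (e (Suc u)) \<le> norm (e u) + norm (X.germ u (Suc u) - Xt.germ u (Suc u))"
    by (metis norm_triangle_ineq)
  then have "norm (e (Suc u)) \<le> norm (e u) + (norm (e u) * W u (Suc u) + V 0 N)"
    using norm_germ_diff_le[of u "Suc u"] V_mono[of 0 u "Suc u" N] assms by simp
  then have "Y (Suc u) \<le> (1 + W u (Suc u)) * norm (e u) + 5 * V 0 N"
    unfolding Y_def by (simp add: algebra_simps)
  also have "\<dots> \<le> 5 / 4 * (1 + W u (Suc u)) * norm (e u) + 5 * (1 + W u (Suc u)) * V 0 N"
    using W_nonneg[of u "Suc u"] V_nonneg[of 0 N] by (intro add_mono mult_right_mono) auto
  also have "\<dots> = 5 / 4 * (1 + W u (Suc u)) * Y u"
    unfolding Y_def by (simp add: algebra_simps)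
  finally show ?thesis .
qed

text \<open>Gronwall-type iteration: [s,N] is cut greedily into maximal intervals of control at most
  2/c. On each of them Y at most doubles, and the step across a cut point costs a factor
  exp (c * omega) of the control it consumes.\<close>
lemma Y_le_exp:
  assumes c: "3 \<le> c" and \<delta>_def: "\<delta> = (2 / c) powr (1 / p)"
    and \<delta>_zeta: "2 * zetaN N (2 / p) * \<delta> \<le> 1" and \<delta>_C: "4 * CpN p N * \<delta> \<le> 1"
    and \<delta>: "4 * \<delta> \<le> 1"
  shows "s \<le> N \<Longrightarrow> s \<le> k \<Longrightarrow> k \<le> N \<Longrightarrow> Y k \<le> 2 * exp (c * omega s N) * Y s"
proof (induction "N - s" arbitrary: s k rule: less_induct)
  case less
  obtain u where u: "s \<le> u" "u \<le> N" "omega s u \<le> 2 / c"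
    and u_max: "u < N \<Longrightarrow> 2 / c < omega s (Suc u)"
    using obtain_maximal_interval_below[OF control_omega less.prems(1), of "2 / c"] c by auto
  have "W s u \<le> \<delta>"
    unfolding W_def \<delta>_def using u p_pos control_nonneg[OF control_omega] by (intro powr_mono2) auto
  then have Y_local: "Y k' \<le> 2 * Y s" if "s \<le> k'" "k' \<le> u" for k'
    using e_bound_on_small_interval[OF u(1,2) _ \<delta>_zeta \<delta>_C \<delta> that] V_mono[of 0 s u N] u
    unfolding Y_def by fastforce
  have exp_ge_1: "1 \<le> exp (c * omega s N)"
    using c control_nonneg[OF control_omega] by simp
  show ?case
  proof (cases "k \<le> u")
    case True
    moreover have "Y s \<le> exp (c * omega s N) * Y s"
      using mult_right_mono[OF exp_ge_1 Y_nonneg[of s]] by simp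
    ultimately show ?thesis
      using Y_local[of k] less.prems by simp
  next
    case False
    then have "u < N" using less.prems by simp
    have "W u (Suc u) powr p = omega u (Suc u)"
      unfolding W_def using p_pos control_nonneg[OF control_omega] by (simp add: powr_powr)
    also have "\<dots> \<le> omega s (Suc u)" using control_mono[OF control_omega, of s u "Suc u"] u by simp
    finally have "5 / 2 * (1 + W u (Suc u)) \<le> exp (c * omega s (Suc u))"
      using jump_factor_le_exp[OF c p_ge_1 W_nonneg] u_max[OF \<open>u < N\<close>] by blast
    have "Y (Suc u) \<le> 5 / 4 * (1 + W u (Suc u)) * Y u" by (rule Y_Suc_le[OF \<open>u < N\<close>])
    also have "\<dots> \<le> 5 / 4 * (1 + W u (Suc u)) * (2 * Y s)"
      using Y_local[of u] u W_nonneg[of u "Suc u"] by (intro mult_left_mono) auto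
    also have "\<dots> = 5 / 2 * (1 + W u (Suc u)) * Y s" by simp
    also have "\<dots> \<le> exp (c * omega s (Suc u)) * Y s"
      using \<open>5 / 2 * (1 + W u (Suc u)) \<le> _\<close> Y_nonneg[of s] by (rule mult_right_mono)
    finally have Y_Suc: "Y (Suc u) \<le> exp (c * omega s (Suc u)) * Y s" .
    have "Y k \<le> 2 * exp (c * omega (Suc u) N) * Y (Suc u)"
      using less.hyps[of "Suc u" k] less.prems False \<open>u < N\<close> u by simp
    also have "\<dots> \<le> 2 * exp (c * omega (Suc u) N) * (exp (c * omega s (Suc u)) * Y s)"
      using Y_Suc by (intro mult_left_mono) auto
    also have "\<dots> = 2 * exp (c * (omega s (Suc u) + omega (Suc u) N)) * Y s"
      by (simp add: distrib_left exp_add)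
    also have "\<dots> \<le> 2 * exp (c * omega s N) * Y s"
      using control_superadditive[OF control_omega, of s "Suc u" N] u \<open>u < N\<close> c Y_nonneg[of s]
      by (intro mult_right_mono mult_left_mono) auto
    finally show ?thesis .
  qed
qed

end

lemma CpN_nonneg: "0 \<le> CpN p N"
  unfolding CpN_def using zetaN_nonneg by simp

lemma cpN_root_ge:
  assumes p: "1 \<le> p"
  shows "4 * exp 2 * max (CpN p N) 1 \<le> cpN p N powr (1 / p)"
proof -
  define m where "m = max (CpN p N) 1"
  have "m powr p \<le> 4 powr (p - 1) * CpN p N powr p + 1"
  proof (cases "1 \<le> CpN p N")
    case True
    have "1 \<le> (4::real) powr (p - 1)" using p by (intro ge_one_powr_ge_zero) auto
    then have "1 * CpN p N powr p \<le> 4 powr (p - 1) * CpN p N powr p"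
      by (rule mult_right_mono) simp
    moreover have "m = CpN p N" using True unfolding m_def by simp
    ultimately show ?thesis by simp
  qed (simp add: m_def)
  then have "(4 * exp 2 * m) powr p \<le> cpN p N"
    unfolding cpN_def by (simp add: powr_mult mult_left_mono)
  then have "((4 * exp 2 * m) powr p) powr (1 / p) \<le> cpN p N powr (1 / p)"
    using p by (intro powr_mono2) auto
  then show ?thesis
    using p unfolding m_def by (simp add: powr_powr)
qed

lemma cpN_root_ge_20: "1 \<le> p \<Longrightarrow> 20 \<le> cpN p N powr (1 / p)"
  using cpN_root_ge[of p N] exp_2_ge_5 mult_mono[of 20 "4 * exp 2" 1 "max (CpN p N) 1"]
  by simp

lemma cpN_ge_3:
  assumes p: "1 \<le> p"
  shows "3 \<le> cpN p N"
proof -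
  have cpN_nonneg: "0 \<le> cpN p N" unfolding cpN_def using CpN_nonneg by simp
  have "(20::real) \<le> 20 powr p" using p powr_mono[of 1 p 20] by simp
  also have "\<dots> \<le> (cpN p N powr (1 / p)) powr p"
    using cpN_root_ge_20[OF p] p by (intro powr_mono2) auto
  also have "\<dots> = cpN p N"
    using p cpN_nonneg by (simp add: powr_powr)
  finally show ?thesis by simp
qed

lemma cpN_scale_bounds:
  fixes p :: real and N :: nat
  assumes p: "1 \<le> p"
  defines "\<delta> \<equiv> (2 / cpN p N) powr (1 / p)"
  shows "4 * CpN p N * \<delta> \<le> 1" "4 * \<delta> \<le> 1" "2 * zetaN N (2 / p) * \<delta> \<le> 1"
proof -
  define m where "m = max (CpN p N) 1"
  have m: "1 \<le> m" "CpN p N \<le> m" unfolding m_def by auto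
  have \<delta>_nonneg: "0 \<le> \<delta>" unfolding \<delta>_def by simp
  have "\<delta> = 2 powr (1 / p) / cpN p N powr (1 / p)"
    unfolding \<delta>_def using cpN_ge_3[OF p] by (simp add: powr_divide)
  also have "\<dots> \<le> 2 / (4 * exp 2 * m)"
  proof (rule frac_le)
    show "2 powr (1 / p) \<le> 2" using p powr_mono[of "1 / p" 1 2] by simp
    show "4 * exp 2 * m \<le> cpN p N powr (1 / p)" using cpN_root_ge[OF p] unfolding m_def .
  qed (use m in auto)
  finally have "4 * m * \<delta> \<le> 2 / exp 2"
    using m by (simp add: field_simps)
  also have "\<dots> \<le> 1" using exp_2_ge_5 by simp
  finally have key: "4 * m * \<delta> \<le> 1" .
  then have le_1: "a * \<delta> \<le> 1" if "a \<le> 4 * m" for a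
    using mult_right_mono[OF that \<delta>_nonneg] by linarith
  show "4 * CpN p N * \<delta> \<le> 1" "4 * \<delta> \<le> 1"
    using m by (auto intro: le_1)
  have "1 \<le> (2::real) powr (2 / p)" using p by (intro ge_one_powr_ge_zero) auto
  then have "zetaN N (2 / p) \<le> CpN p N"
    unfolding CpN_def using zetaN_nonneg mult_right_mono[of 1 "2 powr (2 / p)" "zetaN N (2 / p)"]
    by simp
  then show "2 * zetaN N (2 / p) * \<delta> \<le> 1"
    using m zetaN_nonneg by (intro le_1) simp
qed

theorem theorem5p4:
  fixes p L :: real and N d :: nat
    and f :: "nat \<Rightarrow> 'a::real_normed_vector \<Rightarrow> 'a"
    and w wt :: "nat \<Rightarrow> nat \<Rightarrow> real"
    and xi xit :: 'a and x xt :: "nat \<Rightarrow> 'a"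
  assumes fin_dim: "\<exists>B::'a set. finite B \<and> span B = UNIV"
    and nontriv: "\<exists>v::'a. v \<noteq> 0"
    and p: "1 \<le> p" "p < 2"
    and d: "d \<ge> 1"
    and L: "L > 0"
    and f: "\<And>\<mu>. \<mu> < d \<Longrightarrow> C2b_bounded (f \<mu>) L"
    and x0: "x 0 = xi"
    and xstep: "\<And>k. k < N \<Longrightarrow>
        x (Suc k) = x k + (\<Sum>\<mu><d. (w (Suc k) \<mu> - w k \<mu>) *\<^sub>R f \<mu> (x k))"
    and xt0: "xt 0 = xit"
    and xtstep: "\<And>k. k < N \<Longrightarrow>
        xt (Suc k) = xt k + (\<Sum>\<mu><d. (wt (Suc k) \<mu> - wt k \<mu>) *\<^sub>R f \<mu> (xt k))"
  shows "Max ((\<lambda>k. norm (x k - xt k)) ` {0..N})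
    \<le> 2 * cpN p N powr (1 / p)
        * exp (cpN p N * L powr p * (pvar p d w 0 N powr p + pvar p d wt 0 N powr p))
        * (norm (xi - xit) + L * pvar p d (\<lambda>k \<mu>. w k \<mu> - wt k \<mu>) 0 N)"
proof -
  interpret euler_pair L N d f w wt x xt p
    by unfold_locales (use p L f xstep xtstep in auto)
  define c where "c = cpN p N"
  define R where "R = norm (xi - xit) + V 0 N"
  have "omega 0 N = L powr p * (pvar p d w 0 N powr p + pvar p d wt 0 N powr p)"
    unfolding omega_def using p_pos by (simp add: pvar_powr_eq_pvar_pow)
  moreover have "V 0 N = L * pvar p d (\<lambda>k \<mu>. w k \<mu> - wt k \<mu>) 0 N"
    unfolding V_def omega_diff_def using L p_pos pvar_pow_nonneg
    by (simp add: powr_mult powr_powr pvar_eq_pvar_pow_powr)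
  moreover have "Y 0 \<le> 4 * R"
    using norm_ge_zero[of "xi - xit"] unfolding Y_def R_def e_def x0 xt0 by simp
  then have "Y 0 \<le> c powr (1 / p) * R"
    using cpN_root_ge_20[OF p(1), of N] V_nonneg[of 0 N] mult_right_mono[of 4 "c powr (1 / p)" R]
    unfolding R_def c_def by simp
  then have "norm (x k - xt k) \<le> 2 * c powr (1 / p) * exp (c * omega 0 N) * R" if "k \<le> N" for k
  proof -
    have "norm (x k - xt k) \<le> Y k" unfolding Y_def e_def using V_nonneg[of 0 N] by simp
    also have "\<dots> \<le> 2 * exp (c * omega 0 N) * Y 0"
      using Y_le_exp[OF cpN_ge_3[OF p(1)] refl cpN_scale_bounds(3,1,2)[OF p(1)], of 0 k] that
      unfolding c_def by simp
    also have "\<dots> \<le> 2 * exp (c * omega 0 N) * (c powr (1 / p) * R)"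
      using \<open>Y 0 \<le> c powr (1 / p) * R\<close> by (intro mult_left_mono) auto
    finally show ?thesis by (simp add: mult_ac)
  qed
  ultimately show ?thesis
    unfolding R_def c_def by (intro Max.boundedI) (auto simp: mult_ac)
qed

end
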